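(* For every positive integer $n$, $$\int_0^1 \ln ^2(1-x)\, P_{n}(2 x-1) \, dx = \frac{4 n + 2}{n^2 (n + 1)^2}+\frac{4 H_{n - 1}}{n (n + 1)}.$$
   Context: $P_n$ denotes the $n$-th Legendre polynomial, $P_n(x) = \frac{1}{2^n n!}\frac{d^n}{dx^n}(x^2-1)^n$. $H_k = \sum_{j=1}^k \frac1j$ is the $k$-th harmonic number, with $H_0 = 0$. *)

theory Defs
  imports "HOL-Analysis.Analysis" "HOL-Computational_Algebra.Polynomial"
begin

text \<open>Legendre polynomial via Rodrigues' formula:
  P_n(x) = 1/(2^n n!) d^n/dx^n (x^2-1)^n.\<close>
definition legendre_poly :: "nat \<Rightarrow> real poly" where
  "legendre_poly n = smult (1 / (2 ^ n * fact n)) ((pderiv ^^ n) ([:-1, 0, 1:] ^ n))"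

definition legendre :: "nat \<Rightarrow> real \<Rightarrow> real" where
  "legendre n x = poly (legendre_poly n) x"

definition harm :: "nat \<Rightarrow> real" where
  "harm k = (\<Sum>j=1..k. 1 / real j)"

end

theory Submission
  imports Defs "HOL-Computational_Algebra.Formal_Power_Series" "HOL-Real_Asymp.Real_Asymp"
begin

(* Substituting x = 1 - t turns P_n(2x - 1) into P_n(1 - 2t) = \<Sum>k c_k t^k with
   c_k = (-1)^k (n choose k) (n + k choose k), and \<integral>_0^1 ln^2 t t^k dt = 2/(k+1)^3, so the integral
   equals 2 \<Sum>k c_k/(k+1)^3.  This sum is a Taylor coefficient at x = 1 of the rational function
   G_n(x) = \<Sum>k c_k/(x + k), the Mellin transform of P_n(1 - 2t).  A Vandermonde identity gives
   (x + n + 1) G_(n+1)(x) = (n + 1 - x) G_n(x); since G_n(1) = 0 for n \<ge> 1, comparing the next two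
   Taylor coefficients at x = 1 yields first-order recurrences for \<Sum>k c_k/(k+1)^2 and
   \<Sum>k c_k/(k+1)^3, which are solved in closed form. *)

lemma higher_pderiv_pcompose_linear:
  "(pderiv ^^ m) (pcompose p [:a, b:]) = smult (b ^ m) (pcompose ((pderiv ^^ m) p) [:a, b:])"
  for p :: "'a::idom poly"
  by (induction m) (simp_all add: pderiv_smult pderiv_pcompose pderiv_pCons mult.commute)

lemma pcompose_power_left: "pcompose (p ^ n) q = pcompose p q ^ n"
  for p q :: "'a::comm_semiring_1 poly"
  by (induction n) (simp_all add: pcompose_mult pcompose_1)

lemma legendre_poly_reflect:
  "pcompose (legendre_poly n) [:1, -2:] = smult ((-1) ^ n / fact n) ((pderiv ^^ n) (monom 1 n * [:-1, 1:] ^ n))"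
proof -
  have square: "pcompose [:-1, 0, 1:] [:1, -2::real:] = smult 4 (monom 1 1 * [:-1, 1:])"
    by (simp add: pcompose_pCons monom_Suc)
  have power: "pcompose ([:-1, 0, 1:] ^ n) [:1, -2::real:] = smult (4 ^ n) (monom 1 n * [:-1, 1:] ^ n)"
    unfolding pcompose_power_left square smult_power power_mult_distrib monom_power by simp
  have scalar: "1 / (2 ^ n * fact n) * (4 ^ n / (-2) ^ n) = ((-1) ^ n / fact n :: real)"
  proof -
    have "(4::real) ^ n = 2 ^ n * 2 ^ n" "(-2::real) ^ n = (-1) ^ n * 2 ^ n"
      by (simp_all flip: power_mult_distrib)
    then show ?thesis by (simp add: field_simps)
  qed
  have "pcompose (legendre_poly n) [:1, -2:]
      = smult (1 / (2 ^ n * fact n)) (smult (1 / (-2) ^ n) ((pderiv ^^ n) (pcompose ([:-1, 0, 1:] ^ n) [:1, -2:])))"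
    by (simp add: legendre_poly_def pcompose_smult higher_pderiv_pcompose_linear)
  also have "\<dots> = smult (1 / (2 ^ n * fact n) * (4 ^ n / (-2) ^ n)) ((pderiv ^^ n) (monom 1 n * [:-1, 1:] ^ n))"
    by (simp only: power higher_pderiv_smult smult_smult) (simp add: field_simps)
  finally show ?thesis by (simp only: scalar)
qed

definition shifted_legendre_coeff :: "nat \<Rightarrow> nat \<Rightarrow> real" where
  "shifted_legendre_coeff n k = (-1) ^ k * real (n choose k) * real (n + k choose k)"

lemma coeff_legendre_poly_reflect:
  "coeff (pcompose (legendre_poly n) [:1, -2:]) k = (if k \<le> n then shifted_legendre_coeff n k else 0)"
proof (cases "k \<le> n")
  case True
  have "real (n + k choose k) = real (n + k) gchoose n"
    using binomial_symmetric[of k "n + k"] by (simp add: binomial_gbinomial)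
  then have "pochhammer (real (Suc k)) n = fact n * real (n + k choose k)"
    using gbinomial_pochhammer'[of "real (n + k)" n] by (simp add: add.commute)
  moreover have "coeff ([:-1, 1::real:] ^ n) k = (-1) ^ (n - k) * real (n choose k)"
    using coeff_linear_poly_power[OF True, of "-1::real" 1] by simp
  moreover have "(-1::real) ^ n * (-1) ^ (n - k) = (-1) ^ k"
    using True by (simp flip: power_add) (simp add: minus_one_power_iff)
  ultimately show ?thesis
    using True by (simp add: legendre_poly_reflect coeff_higher_pderiv coeff_monom_mult shifted_legendre_coeff_def)
next
  case False
  then have "coeff ([:-1, 1::real:] ^ n) k = 0"
    by (intro coeff_eq_0) (simp add: degree_linear_power)
  then show ?thesis
    using False by (simp add: legendre_poly_reflect coeff_higher_pderiv coeff_monom_mult)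
qed

lemma legendre_reflect_expansion: "legendre n (1 - 2 * t) = (\<Sum>k\<le>n. shifted_legendre_coeff n k * t ^ k)"
proof -
  have "pcompose (legendre_poly n) [:1, -2:] = (\<Sum>k\<le>n. monom (shifted_legendre_coeff n k) k)"
    by (rule poly_eqI) (simp add: coeff_legendre_poly_reflect coeff_sum coeff_monom)
  then have "poly (pcompose (legendre_poly n) [:1, -2:]) t = (\<Sum>k\<le>n. shifted_legendre_coeff n k * t ^ k)"
    by (simp add: poly_sum poly_monom)
  then show ?thesis
    by (simp add: legendre_def poly_pcompose mult.commute)
qed

lemma ln_sq_power_antiderivative:
  fixes t :: real
  assumes "t > 0"
  shows "((\<lambda>t. t ^ Suc k * ((ln t)\<^sup>2 / (real k + 1) - 2 * ln t / (real k + 1)\<^sup>2 + 2 / (real k + 1) ^ 3))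
          has_real_derivative (ln t)\<^sup>2 * t ^ k) (at t)"
proof -
  txt \<open>K stands for k + 1, kept atomic so that field_simps can clear the denominators.\<close>
  have cancel: "(T + r * T) * (L\<^sup>2 / K - 2 * L / K\<^sup>2 + 2 / K ^ 3) + (2 * L / (t * K) - 2 * K\<^sup>2 / (t * K ^ 4)) * (t * T)
      = L\<^sup>2 * T" if "r = K - 1" "K \<noteq> 0" for K r L T :: real
    using that(2) assms unfolding that(1) by (simp add: field_simps power2_eq_square power3_eq_cube power4_eq_xxxx)
  have pow: "real k * t ^ (k - Suc 0) * t = real k * t ^ k"
    by (cases k) simp_all
  have "(t ^ k + real k * t ^ (k - Suc 0) * t) * ((ln t)\<^sup>2 / (real k + 1) - 2 * ln t / (real k + 1)\<^sup>2 + 2 / (real k + 1) ^ 3)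
      + (2 * ln t / (t * (real k + 1)) - 2 * (real k + 1)\<^sup>2 / (t * (real k + 1) ^ 4)) * (t * t ^ k) = (ln t)\<^sup>2 * t ^ k"
    unfolding pow by (rule cancel) simp_all
  then show ?thesis
    using assms by (auto intro!: derivative_eq_intros)
qed

lemma has_integral_ln_sq_power: "((\<lambda>t. (ln t)\<^sup>2 * t ^ k) has_integral 2 / (real k + 1) ^ 3) {0..1}"
proof -
  define F :: "real \<Rightarrow> real"
    where "F = (\<lambda>t. t ^ Suc k * ((ln t)\<^sup>2 / (real k + 1) - 2 * ln t / (real k + 1)\<^sup>2 + 2 / (real k + 1) ^ 3))"
  have deriv: "(F has_real_derivative (ln t)\<^sup>2 * t ^ k) (at t)" if "t > 0" for t
    unfolding F_def using ln_sq_power_antiderivative[OF that] .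
  have "((\<lambda>t. t ^ k * (t * (ln t)\<^sup>2 / (real k + 1) - 2 * (t * ln t) / (real k + 1)\<^sup>2 + 2 * t / (real k + 1) ^ 3))
      \<longlongrightarrow> 0 ^ k * (0 / (real k + 1) - 2 * 0 / (real k + 1)\<^sup>2 + 2 * 0 / (real k + 1) ^ 3)) (at_right 0)"
  proof (intro tendsto_intros)
    show "((\<lambda>t::real. t * (ln t)\<^sup>2) \<longlongrightarrow> 0) (at_right 0)" by real_asymp
    show "((\<lambda>t::real. t * ln t) \<longlongrightarrow> 0) (at_right 0)" by real_asymp
  qed auto
  then have at_0: "(F \<longlongrightarrow> F 0) (at_right 0)"
    by (simp add: F_def algebra_simps)
  have "isCont F t" if "t > 0" for t
    using deriv[OF that] by (rule DERIV_isCont)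
  then have "continuous_on {0..1} F"
    using at_0 by (intro continuous_on_IccI) (auto simp: isCont_def filterlim_at_split)
  then have "((\<lambda>t. (ln t)\<^sup>2 * t ^ k) has_integral F 1 - F 0) {0..1}"
    by (rule fundamental_theorem_of_calculus_interior[OF zero_le_one])
       (auto simp: has_real_derivative_iff_has_vector_derivative[symmetric] intro: deriv)
  then show ?thesis by (simp add: F_def)
qed

lemma has_integral_reflect_01:
  fixes f :: "real \<Rightarrow> 'a::banach"
  assumes "(f has_integral I) {0..1}"
  shows "((\<lambda>x. f (1 - x)) has_integral I) {0..1}"
proof -
  have "(\<lambda>x. - x + 1) ` {0..1::real} = {0..1}"
    by (auto simp: image_iff intro!: bexI[of _ "1 - _"])
  then show ?thesis
    using has_integral_affinity01[of f I "-1" 1] assms by simp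
qed

definition legendre_coeff_sum :: "nat \<Rightarrow> nat \<Rightarrow> real" where
  "legendre_coeff_sum n j = (\<Sum>k\<le>n. shifted_legendre_coeff n k / (real k + 1) ^ j)"

lemma has_integral_ln_sq_legendre_reflect:
  "((\<lambda>t. (ln t)\<^sup>2 * legendre n (1 - 2 * t)) has_integral 2 * legendre_coeff_sum n 3) {0..1}"
proof -
  have "((\<lambda>t. \<Sum>k\<le>n. shifted_legendre_coeff n k * ((ln t)\<^sup>2 * t ^ k))
      has_integral (\<Sum>k\<le>n. shifted_legendre_coeff n k * (2 / (real k + 1) ^ 3))) {0..1}"
    by (intro has_integral_sum has_integral_mult_right has_integral_ln_sq_power) simp
  then show ?thesis
    unfolding legendre_reflect_expansion legendre_coeff_sum_def by (simp add: sum_distrib_left algebra_simps)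
qed

text \<open>Since (-1)^k (n + k choose k) = (-(n + 1) gchoose k), this is Vandermonde's identity for
  (0 gchoose n + 1).\<close>

lemma alternating_binomial_sum_vanishes:
  "(\<Sum>k\<le>Suc n. (-1) ^ k * real (Suc n choose k) * real (n + k choose k)) = 0"
proof -
  have "(\<Sum>k\<le>Suc n. (-1) ^ k * real (Suc n choose k) * real (n + k choose k))
      = (\<Sum>k=0..Suc n. (- real (Suc n) gchoose k) * (real (Suc n) gchoose (Suc n - k)))"
  proof (intro sum.cong)
    fix k assume "k \<in> {0..Suc n}"
    then have "real (Suc n choose k) = real (Suc n) gchoose (Suc n - k)"
      by (subst binomial_symmetric) (simp_all add: binomial_gbinomial)
    moreover have "(-1) ^ k * real (n + k choose k) = - real (Suc n) gchoose k"
      using gbinomial_minus[of "real (Suc n)" k] by (simp add: binomial_gbinomial add_ac)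
    ultimately show "(-1) ^ k * real (Suc n choose k) * real (n + k choose k)
      = (- real (Suc n) gchoose k) * (real (Suc n) gchoose (Suc n - k))"
      by (metis mult.assoc mult.commute)
  qed (auto simp: atLeast0AtMost)
  also have "\<dots> = 0"
    by (subst gbinomial_Vandermonde) simp
  finally show ?thesis .
qed

lemma Suc_times_binomial_add: "Suc n * (Suc n + k choose k) = (Suc n + k) * (n + k choose k)"
proof -
  have "Suc n + k choose k = Suc (n + k) choose Suc n"
    using binomial_symmetric[of k "Suc n + k"] by simp
  moreover have "n + k choose k = n + k choose n"
    using binomial_symmetric[of k "n + k"] by simp
  ultimately show ?thesis using Suc_times_binomial[of n "n + k"] by simp
qed

lemma shifted_legendre_coeff_Suc:
  fixes x :: real
  assumes "k \<le> Suc n"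
  shows "(x + real (Suc n)) * shifted_legendre_coeff (Suc n) k - (real (Suc n) - x) * shifted_legendre_coeff n k
       = 2 * (x + real k) * ((-1) ^ k * real (Suc n choose k) * real (n + k choose k))"
proof -
  have upper: "real (Suc n) * real (Suc n + k choose k) = real (Suc n + k) * real (n + k choose k)"
    using Suc_times_binomial_add[of n k] by (metis of_nat_mult)
  have lower: "real (Suc n) * real (n choose k) = (real (Suc n) - real k) * real (Suc n choose k)"
    using binomial_absorb_comp[of "Suc n" k] assms by (metis diff_Suc_1 of_nat_diff of_nat_mult)
  have "real (Suc n) * ((x + real (Suc n)) * shifted_legendre_coeff (Suc n) k - (real (Suc n) - x) * shifted_legendre_coeff n k)
      = (-1) ^ k * ((x + real (Suc n)) * real (Suc n choose k) * (real (Suc n) * real (Suc n + k choose k))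
         - (real (Suc n) - x) * (real (Suc n) * real (n choose k)) * real (n + k choose k))"
    unfolding shifted_legendre_coeff_def by (simp add: algebra_simps)
  also have "\<dots> = real (Suc n) * (2 * (x + real k) * ((-1) ^ k * real (Suc n choose k) * real (n + k choose k)))"
    unfolding upper lower by (simp add: algebra_simps)
  finally show ?thesis by (simp only: mult_left_cancel of_nat_eq_0_iff nat.distinct(1) simp_thms)
qed

definition legendre_fraction_sum :: "nat \<Rightarrow> real \<Rightarrow> real" where
  "legendre_fraction_sum n x = (\<Sum>k\<le>n. shifted_legendre_coeff n k / (x + real k))"

lemma legendre_fraction_sum_Suc:
  fixes x :: real
  assumes "x > 0"
  shows "(x + real (Suc n)) * legendre_fraction_sum (Suc n) x = (real (Suc n) - x) * legendre_fraction_sum n x"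
proof -
  let ?c = shifted_legendre_coeff
  have extend: "legendre_fraction_sum n x = (\<Sum>k\<le>Suc n. ?c n k / (x + real k))"
    by (simp add: legendre_fraction_sum_def shifted_legendre_coeff_def)
  have summand: "(x + real (Suc n)) * (?c (Suc n) k / (x + real k)) - (real (Suc n) - x) * (?c n k / (x + real k))
      = 2 * ((-1) ^ k * real (Suc n choose k) * real (n + k choose k))" if "k \<le> Suc n" for k
  proof -
    have "(x + real (Suc n)) * (?c (Suc n) k / (x + real k)) - (real (Suc n) - x) * (?c n k / (x + real k))
        = ((x + real (Suc n)) * ?c (Suc n) k - (real (Suc n) - x) * ?c n k) / (x + real k)"
      by (simp add: diff_divide_distrib)
    also have "\<dots> = 2 * (x + real k) * ((-1) ^ k * real (Suc n choose k) * real (n + k choose k)) / (x + real k)"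
      by (simp only: shifted_legendre_coeff_Suc[OF that])
    also have "\<dots> = 2 * ((-1) ^ k * real (Suc n choose k) * real (n + k choose k))"
      using assms by (simp add: add_pos_nonneg field_simps)
    finally show ?thesis .
  qed
  have "(x + real (Suc n)) * legendre_fraction_sum (Suc n) x - (real (Suc n) - x) * legendre_fraction_sum n x
      = (\<Sum>k\<le>Suc n. (x + real (Suc n)) * (?c (Suc n) k / (x + real k)) - (real (Suc n) - x) * (?c n k / (x + real k)))"
    by (simp only: extend legendre_fraction_sum_def[of "Suc n"] sum_distrib_left sum_subtractf)
  also have "\<dots> = (\<Sum>k\<le>Suc n. 2 * ((-1) ^ k * real (Suc n choose k) * real (n + k choose k)))"
    by (intro sum.cong refl summand) simp
  also have "\<dots> = 2 * (\<Sum>k\<le>Suc n. (-1) ^ k * real (Suc n choose k) * real (n + k choose k))"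
    by (simp only: sum_distrib_left)
  also have "\<dots> = 0"
    by (simp only: alternating_binomial_sum_vanishes mult_zero_right)
  finally show ?thesis by simp
qed

definition legendre_fraction_remainder :: "nat \<Rightarrow> real \<Rightarrow> real" where
  "legendre_fraction_remainder n x = (\<Sum>k\<le>n. shifted_legendre_coeff n k / ((x + real k) * (real k + 1)\<^sup>2))"

lemma divide_taylor_2:
  fixes a y d :: "'a::field"
  assumes "y \<noteq> 0" "d \<noteq> 0"
  shows "a / y = a / d - (y - d) * (a / d\<^sup>2) + (y - d)\<^sup>2 * (a / (y * d\<^sup>2))"
  using assms by (simp add: field_simps power2_eq_square; algebra)

lemma legendre_fraction_sum_taylor:
  fixes x :: real
  assumes "x > 0"
  shows "legendre_fraction_sum n x = legendre_coeff_sum n 1 - (x - 1) * legendre_coeff_sum n 2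
           + (x - 1)\<^sup>2 * legendre_fraction_remainder n x"
proof -
  have "c / (x + real k) = c / (real k + 1) - (x - 1) * (c / (real k + 1)\<^sup>2)
          + (x - 1)\<^sup>2 * (c / ((x + real k) * (real k + 1)\<^sup>2))" for c k
    using divide_taylor_2[of "x + real k" "real k + 1" c] assms by (simp add: add_pos_nonneg)
  then show ?thesis
    unfolding legendre_fraction_sum_def legendre_coeff_sum_def legendre_fraction_remainder_def
    by (simp add: sum.distrib sum_subtractf sum_distrib_left)
qed

lemma legendre_fraction_remainder_1: "legendre_fraction_remainder n 1 = legendre_coeff_sum n 3"
  unfolding legendre_fraction_remainder_def legendre_coeff_sum_def
  by (intro sum.cong refl) (simp add: power2_eq_square power3_eq_cube add.commute)

lemma isCont_legendre_fraction_remainder: "isCont (legendre_fraction_remainder n) 1"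
  unfolding legendre_fraction_remainder_def by (intro continuous_intros) (simp add: add_pos_pos)

lemma legendre_coeff_sum_1:
  assumes "n \<ge> 1"
  shows "legendre_coeff_sum n 1 = 0"
  using assms
proof (induction n rule: nat_induct_at_least)
  case base
  show ?case using legendre_fraction_sum_Suc[of 1 0] legendre_fraction_sum_taylor[of 1 1] by simp
next
  case (Suc n)
  then show ?case using legendre_fraction_sum_Suc[of 1 n] legendre_fraction_sum_taylor[of 1] by simp
qed

lemma isCont_eq_if_eventually_eq_at_right:
  fixes f g :: "real \<Rightarrow> 'a::t2_space"
  assumes "isCont f a" "isCont g a" "eventually (\<lambda>x. f x = g x) (at_right a)"
  shows "f a = g a"
proof (rule tendsto_unique)
  show "(g \<longlongrightarrow> f a) (at_right a)"
    using assms(1,3) by (auto simp: isCont_def filterlim_at_split intro: Lim_transform_eventually)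
  show "(g \<longlongrightarrow> g a) (at_right a)"
    using assms(2) by (simp add: isCont_def filterlim_at_split)
qed simp

lemma legendre_fraction_sum_near_1:
  fixes x :: real
  assumes "n \<ge> 1" "x > 0"
  shows "legendre_fraction_sum n x = (x - 1) * ((x - 1) * legendre_fraction_remainder n x - legendre_coeff_sum n 2)"
  using legendre_fraction_sum_taylor[OF assms(2), of n]
  unfolding legendre_coeff_sum_1[OF assms(1)] by (simp add: algebra_simps power2_eq_square)

lemma legendre_fraction_remainder_Suc:
  fixes x :: real
  assumes "n \<ge> 1" "x > 0" "x \<noteq> 1"
  shows "(x + real n + 1) * ((x - 1) * legendre_fraction_remainder (Suc n) x - legendre_coeff_sum (Suc n) 2)
       = (real n + 1 - x) * ((x - 1) * legendre_fraction_remainder n x - legendre_coeff_sum n 2)"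
  using legendre_fraction_sum_Suc[OF assms(2), of n] assms
  by (simp add: legendre_fraction_sum_near_1 ac_simps)

lemma legendre_coeff_sum_2_Suc:
  assumes "n \<ge> 1"
  shows "(real n + 2) * legendre_coeff_sum (Suc n) 2 = real n * legendre_coeff_sum n 2"
proof -
  define f :: "real \<Rightarrow> real"
    where "f = (\<lambda>x. (x + real n + 1) * ((x - 1) * legendre_fraction_remainder (Suc n) x - legendre_coeff_sum (Suc n) 2))"
  define g :: "real \<Rightarrow> real"
    where "g = (\<lambda>x. (real n + 1 - x) * ((x - 1) * legendre_fraction_remainder n x - legendre_coeff_sum n 2))"
  have "f 1 = g 1"
  proof (rule isCont_eq_if_eventually_eq_at_right[where f = f and g = g])
    show "isCont f 1" "isCont g 1"
      unfolding f_def g_def by (intro continuous_intros isCont_legendre_fraction_remainder)+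
    show "eventually (\<lambda>x. f x = g x) (at_right 1)"
      unfolding eventually_at_right_field f_def g_def
      using assms by (intro exI[of _ 2] conjI allI impI legendre_fraction_remainder_Suc) auto
  qed
  then show ?thesis by (simp add: f_def g_def algebra_simps)
qed

lemma legendre_coeff_sum_3_Suc:
  assumes "n \<ge> 1"
  shows "(real n + 2) * legendre_coeff_sum (Suc n) 3
     = real n * legendre_coeff_sum n 3 + legendre_coeff_sum (Suc n) 2 + legendre_coeff_sum n 2"
proof -
  define f :: "real \<Rightarrow> real"
    where "f = (\<lambda>x. (x + real n + 1) * legendre_fraction_remainder (Suc n) x - legendre_coeff_sum (Suc n) 2)"
  define g :: "real \<Rightarrow> real"
    where "g = (\<lambda>x. (real n + 1 - x) * legendre_fraction_remainder n x + legendre_coeff_sum n 2)"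
  have f_eq_g: "f x = g x" if "1 < x" for x
  proof -
    have "(x - 1) * f x = (x - 1) * g x"
      using legendre_fraction_remainder_Suc[OF assms, of x] legendre_coeff_sum_2_Suc[OF assms] that
      by (simp add: f_def g_def algebra_simps)
    then show ?thesis using that by simp
  qed
  have "f 1 = g 1"
  proof (rule isCont_eq_if_eventually_eq_at_right[where f = f and g = g])
    show "isCont f 1" "isCont g 1"
      unfolding f_def g_def by (intro continuous_intros isCont_legendre_fraction_remainder)+
    show "eventually (\<lambda>x. f x = g x) (at_right 1)"
      using eventually_at_right_less[of 1] by (rule eventually_mono) (rule f_eq_g)
  qed
  then show ?thesis by (simp add: f_def g_def legendre_fraction_remainder_1 algebra_simps)
qed

lemma legendre_coeff_sum_2:
  assumes "n \<ge> 1"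
  shows "legendre_coeff_sum n 2 = 1 / (real n * (real n + 1))"
  using assms
proof (induction n rule: nat_induct_at_least)
  case base
  show ?case by (simp add: legendre_coeff_sum_def shifted_legendre_coeff_def)
next
  case (Suc n)
  have step: "S' = 1 / (b * d)" if "a > 0" "b > 0" "d > 0" "d * S' = a * (1 / (a * b))"
    for a b d S' :: real
    using that by (simp add: field_simps)
  have "legendre_coeff_sum (Suc n) 2 = 1 / ((1 + real n) * (2 + real n))"
    using legendre_coeff_sum_2_Suc[OF Suc.hyps] Suc
    by (intro step[of "real n"]) (simp_all add: ac_simps)
  then show ?case by simp
qed

lemma legendre_coeff_sum_3:
  assumes "n \<ge> 1"
  shows "legendre_coeff_sum n 3
     = (2 * real n + 1) / ((real n)\<^sup>2 * (real n + 1)\<^sup>2) + 2 * harm (n - 1) / (real n * (real n + 1))"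
  using assms
proof (induction n rule: nat_induct_at_least)
  case base
  show ?case by (simp add: legendre_coeff_sum_def shifted_legendre_coeff_def harm_def)
next
  case (Suc n)
  txt \<open>Here a, b, d stand for n, n + 1, n + 2, kept atomic so that field_simps can clear denominators.\<close>
  have step: "T' = (2 * b + 1) / (b\<^sup>2 * d\<^sup>2) + 2 * (h + 1 / a) / (b * d)"
    if "a > 0" "b = 1 + a" "d = 2 + a"
      and "d * T' = a * ((2 * a + 1) / (a\<^sup>2 * b\<^sup>2) + 2 * h / (a * b)) + 1 / (b * d) + 1 / (a * b)"
    for a b d h T' :: real
  proof -
    have "b > 0" "d > 0" using that(1-3) by simp_all
    then have "T' = (a * ((2 * a + 1) / (a\<^sup>2 * b\<^sup>2) + 2 * h / (a * b)) + 1 / (b * d) + 1 / (a * b)) / d"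
      using that(4) by (simp add: eq_divide_eq mult.commute)
    also have "\<dots> = (2 * b + 1) / (b\<^sup>2 * d\<^sup>2) + 2 * (h + 1 / a) / (b * d)"
      using that(1) \<open>b > 0\<close> \<open>d > 0\<close>
      by (simp add: field_simps power2_eq_square) (simp add: that(2,3) algebra_simps)
    finally show ?thesis .
  qed
  have "legendre_coeff_sum (Suc n) 3
      = (2 * (1 + real n) + 1) / ((1 + real n)\<^sup>2 * (2 + real n)\<^sup>2) + 2 * (harm (n - 1) + 1 / real n) / ((1 + real n) * (2 + real n))"
    using legendre_coeff_sum_3_Suc[OF Suc.hyps] Suc legendre_coeff_sum_2[OF Suc.hyps] legendre_coeff_sum_2[of "Suc n"]
    by (intro step[of "real n"]) (simp_all add: ac_simps)
  moreover have "harm n = harm (n - 1) + 1 / real n"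
    using Suc.hyps by (cases n) (simp_all add: harm_def)
  ultimately show ?case by simp
qed

theorem mainTheorem6:
  fixes n :: nat
  assumes "n \<ge> 1"
  shows "((\<lambda>x. (ln (1 - x))\<^sup>2 * legendre n (2 * x - 1)) has_integral
           ((4 * real n + 2) / ((real n)\<^sup>2 * (real n + 1)\<^sup>2)
            + 4 * harm (n - 1) / (real n * (real n + 1)))) {0..1}"
proof -
  have "((\<lambda>x. (ln (1 - x))\<^sup>2 * legendre n (1 - 2 * (1 - x))) has_integral 2 * legendre_coeff_sum n 3) {0..1}"
    using has_integral_reflect_01[OF has_integral_ln_sq_legendre_reflect] .
  moreover have "2 * legendre_coeff_sum n 3
      = (4 * real n + 2) / ((real n)\<^sup>2 * (real n + 1)\<^sup>2) + 4 * harm (n - 1) / (real n * (real n + 1))"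
    by (simp add: legendre_coeff_sum_3[OF assms] add_divide_distrib)
  ultimately show ?thesis by simp
qed

end
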